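(* Let $(X,G)$ be a $G$-system with metric $d$ and $(F_n)$ a Følner sequence in $G$. For $\alpha,\varepsilon\in(0,1)$ define $d_{\alpha,\varepsilon}(x,y)=d(x,y)$ if $d(x,y)\ge\varepsilon$ and $d_{\alpha,\varepsilon}(x,y)=\varepsilon^{1-\alpha}d(x,y)^\alpha$ if $d(x,y)<\varepsilon$. Then $$\overline{\mathrm{mdim}}_{\mathrm H}(X,\{F_n\},d_{\alpha,\varepsilon})=\frac{\overline{\mathrm{mdim}}_{\mathrm H}(X,\{F_n\},d)}{\alpha}.$$
   Context: $G$ is a countable discrete amenable group; a $G$-system is a compact metric space with a continuous $G$-action. For finite nonempty $F\subset G$, $\rho_F(x,y)=\max_{g\in F}\rho(gx,gy)$. $\mathrm H^s_\varepsilon(X,\rho)=\inf\{\sum_{i\ge1}(\mathrm{diam}_\rho E_i)^s: X=\bigcup_iE_i,\ \mathrm{diam}_\rho E_i<\varepsilon\}$ (with $0^0=1$), $\dim_{\mathrm H}(X,\rho,\varepsilon)=\sup\{s\ge0:\mathrm H^s_\varepsilon(X,\rho)\ge1\}$, and $\overline{\mathrm{mdim}}_{\mathrm H}(X,\{F_n\},\rho)=\lim_{\varepsilon\to0}\limsup_{n}\frac{\dim_{\mathrm H}(X,\rho_{F_n},\varepsilon)}{|F_n|}$. *)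

theory Defs
  imports "HOL-Analysis.Analysis"
begin

text \<open>The group G is a type 'g of class group_add (written additively, not
necessarily commutative) and countable; the action is act :: 'g => 'x => 'x on
the carrier X of a compact metric space (X, d).\<close>

definition G_system :: "('g::{group_add,countable} \<Rightarrow> 'x \<Rightarrow> 'x) \<Rightarrow> 'x set \<Rightarrow> ('x \<Rightarrow> 'x \<Rightarrow> real) \<Rightarrow> bool" where
  "G_system act X d \<longleftrightarrow>
     Metric_space X d \<and> compact_space (Metric_space.mtopology X d) \<and>
     (\<forall>x\<in>X. act 0 x = x) \<and>
     (\<forall>g h. \<forall>x\<in>X. act (g + h) x = act g (act h x)) \<and>
     (\<forall>g. act g ` X \<subseteq> X \<and>
          continuous_map (Metric_space.mtopology X d) (Metric_space.mtopology X d) (act g))"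

definition symdiff :: "'a set \<Rightarrow> 'a set \<Rightarrow> 'a set" where
  "symdiff A B = (A - B) \<union> (B - A)"

definition folner :: "(nat \<Rightarrow> 'g::group_add set) \<Rightarrow> bool" where
  "folner F \<longleftrightarrow> (\<forall>n. finite (F n) \<and> F n \<noteq> {}) \<and>
     (\<forall>g. (\<lambda>n. real (card (symdiff ((\<lambda>h. g + h) ` F n) (F n))) / real (card (F n)))
            \<longlonglongrightarrow> 0)"

definition dyn_metric :: "('g \<Rightarrow> 'x \<Rightarrow> 'x) \<Rightarrow> ('x \<Rightarrow> 'x \<Rightarrow> real) \<Rightarrow> 'g set \<Rightarrow> 'x \<Rightarrow> 'x \<Rightarrow> real" where
  "dyn_metric act \<rho> F x y = Max ((\<lambda>g. \<rho> (act g x) (act g y)) ` F)"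

definition diam_rho :: "('x \<Rightarrow> 'x \<Rightarrow> real) \<Rightarrow> 'x set \<Rightarrow> real" where
  "diam_rho \<rho> E = (if E = {} then 0 else (SUP p\<in>E \<times> E. \<rho> (fst p) (snd p)))"

text \<open>power with the convention 0^0 = 1\<close>
definition pw :: "real \<Rightarrow> real \<Rightarrow> real" where
  "pw a s = (if s = 0 then 1 else a powr s)"

definition hausdorff_content :: "'x set \<Rightarrow> ('x \<Rightarrow> 'x \<Rightarrow> real) \<Rightarrow> real \<Rightarrow> real \<Rightarrow> ennreal" where
  "hausdorff_content X \<rho> eps s =
     (INF (I, E) \<in> {(I :: nat set, E :: nat \<Rightarrow> 'x set).
                     X = (\<Union>i\<in>I. E i) \<and> (\<forall>i\<in>I. diam_rho \<rho> (E i) < eps)}.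
        (\<Sum>i. if i \<in> I then ennreal (pw (diam_rho \<rho> (E i)) s) else 0))"

definition dimH :: "'x set \<Rightarrow> ('x \<Rightarrow> 'x \<Rightarrow> real) \<Rightarrow> real \<Rightarrow> ereal" where
  "dimH X \<rho> eps = Sup {ereal s | s. s \<ge> 0 \<and> hausdorff_content X \<rho> eps s \<ge> 1}"

definition upper_mdimH :: "('g \<Rightarrow> 'x \<Rightarrow> 'x) \<Rightarrow> 'x set \<Rightarrow> (nat \<Rightarrow> 'g set) \<Rightarrow> ('x \<Rightarrow> 'x \<Rightarrow> real) \<Rightarrow> ereal" where
  "upper_mdimH act X F \<rho> =
     Lim (at_right 0) (\<lambda>eps. limsup (\<lambda>n. dimH X (dyn_metric act \<rho> (F n)) eps / ereal (real (card (F n)))))"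

definition d_alpha_eps :: "('x \<Rightarrow> 'x \<Rightarrow> real) \<Rightarrow> real \<Rightarrow> real \<Rightarrow> 'x \<Rightarrow> 'x \<Rightarrow> real" where
  "d_alpha_eps d \<alpha> \<epsilon> x y = (if d x y \<ge> \<epsilon> then d x y else \<epsilon> powr (1 - \<alpha>) * d x y powr \<alpha>)"

end

theory Submission
  imports Defs
begin

text \<open>On nonnegative distances d_alpha_eps d \<alpha> \<epsilon> = \<phi> \<circ> d for the increasing continuous map
\<phi>(t) = max t (\<epsilon>^(1-\<alpha>) t^\<alpha>), so every dynamical metric and every diameter is transformed by \<phi>.
For \<delta> \<le> \<epsilon> the sets of new diameter < \<delta> are exactly those of old diameter < r = \<phi>\<inverse>(\<delta>), and on
them the new diameter is \<epsilon>^(1-\<alpha>) D^\<alpha>. Comparing covers term by term gives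
\<alpha> dim_H(X, d'_F, \<delta>) \<le> dim_H(X, d_F, r) and, using D < r to trade exponent against the constant
\<epsilon>^(1-\<alpha>), also (ln r / ln \<delta>) dim_H(X, d_F, r) \<le> dim_H(X, d'_F, \<delta>). Both bounds survive division
by |F_n| and limsup, and as \<delta> \<rightarrow> 0 we have r \<rightarrow> 0 and ln r / ln \<delta> \<rightarrow> 1/\<alpha>.\<close>

text \<open>The profile of d_alpha_eps on [0, \<infinity>), written with max so that it is monotone and
continuous on all of \<real>.\<close>

definition snowflake :: "real \<Rightarrow> real \<Rightarrow> real \<Rightarrow> real" where
  "snowflake a e t = max t (e powr (1 - a) * max t 0 powr a)"

definition snowflake_inv :: "real \<Rightarrow> real \<Rightarrow> real \<Rightarrow> real" where
  "snowflake_inv a e r = (r / e powr (1 - a)) powr (1 / a)"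

lemma snowflake_zero [simp]: "snowflake a e 0 = 0"
  by (simp add: snowflake_def)

lemma mono_snowflake:
  assumes "0 < a" "0 < e"
  shows "mono (snowflake a e)"
proof
  fix x y :: real
  assume "x \<le> y"
  then have "max x 0 powr a \<le> max y 0 powr a"
    using assms by (intro powr_mono2) auto
  then show "snowflake a e x \<le> snowflake a e y"
    unfolding snowflake_def using \<open>x \<le> y\<close> by (smt (verit) mult_left_mono powr_ge_zero)
qed

lemma continuous_on_snowflake:
  assumes "0 < a"
  shows "continuous_on UNIV (snowflake a e)"
  unfolding snowflake_def using assms
  by (intro continuous_intros continuous_on_powr') auto

lemma snowflake_less_iff:
  assumes "0 < a" "0 < e" "0 \<le> x" "0 \<le> y"
  shows "snowflake a e x < snowflake a e y \<longleftrightarrow> x < y"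
proof -
  have "snowflake a e x < snowflake a e y" if "0 \<le> x" "x < y" for x y
  proof -
    have "max x 0 powr a < max y 0 powr a"
      using assms that by (intro powr_less_mono2) auto
    then have "e powr (1 - a) * max x 0 powr a < e powr (1 - a) * max y 0 powr a"
      using assms by (intro mult_strict_left_mono) auto
    then show ?thesis
      unfolding snowflake_def using that by linarith
  qed
  moreover have "snowflake a e y \<le> snowflake a e x" if "y \<le> x"
    using mono_snowflake[OF assms(1,2)] that by (rule monoD)
  ultimately show ?thesis
    using assms by (meson linorder_not_le)
qed

lemma snowflake_eq_small:
  assumes "0 < a" "a < 1" "0 \<le> t" "t \<le> e"
  shows "snowflake a e t = e powr (1 - a) * t powr a"
proof (cases "t = 0")
  case False
  then have "t powr (1 - a) * t powr a \<le> e powr (1 - a) * t powr a"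
    using assms by (intro mult_right_mono powr_mono2) auto
  moreover have "t powr (1 - a) * t powr a = t"
    using False assms by (simp add: powr_add [symmetric])
  ultimately show ?thesis
    using assms unfolding snowflake_def by auto
qed (use assms in \<open>simp add: snowflake_def\<close>)

lemma d_alpha_eps_eq_snowflake:
  assumes "0 < a" "a < 1" "0 < e" "0 \<le> d x y"
  shows "d_alpha_eps d a e x y = snowflake a e (d x y)"
proof (cases "e \<le> d x y")
  case True
  have "e powr (1 - a) * d x y powr a \<le> d x y powr (1 - a) * d x y powr a"
    using True assms by (intro mult_right_mono powr_mono2) auto
  also have "\<dots> = d x y"
    using True assms by (simp add: powr_add [symmetric])
  finally show ?thesis
    using True assms unfolding d_alpha_eps_def snowflake_def by auto
qed (use assms snowflake_eq_small in \<open>auto simp: d_alpha_eps_def\<close>)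

lemma snowflake_inv_pos: "0 < e \<Longrightarrow> 0 < r \<Longrightarrow> 0 < snowflake_inv a e r"
  by (simp add: snowflake_inv_def)

lemma snowflake_inv_le:
  assumes "0 < a" "0 < e" "0 < r" "r \<le> e"
  shows "snowflake_inv a e r \<le> e"
proof -
  have "r / e powr (1 - a) \<le> e / e powr (1 - a)"
    using assms by (simp add: divide_right_mono)
  also have "\<dots> = e powr a"
    using assms by (simp add: powr_diff)
  finally have "r / e powr (1 - a) \<le> e powr a" .
  then have "snowflake_inv a e r \<le> (e powr a) powr (1 / a)"
    unfolding snowflake_inv_def using assms by (intro powr_mono2) auto
  also have "\<dots> = e"
    using assms by (simp add: powr_powr)
  finally show ?thesis .
qed

lemma snowflake_snowflake_inv:
  assumes "0 < a" "a < 1" "0 < e" "0 < r" "r \<le> e"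
  shows "snowflake a e (snowflake_inv a e r) = r"
proof -
  have "snowflake_inv a e r powr a = r / e powr (1 - a)"
    using assms by (simp add: snowflake_inv_def powr_powr)
  then show ?thesis
    using assms snowflake_inv_pos snowflake_inv_le
    by (simp add: snowflake_eq_small less_imp_le)
qed

lemma snowflake_inv_log_ratio:
  assumes "0 < a" "a < 1" "0 < e" "e < 1" "0 < \<delta>" "\<delta> \<le> e"
  defines "k \<equiv> ln (snowflake_inv a e \<delta>) / ln \<delta>"
  shows "0 < k" "a * k \<le> 1"
    and "snowflake_inv a e \<delta> powr (t - a * (k * t)) = (e powr (1 - a)) powr (k * t)"
proof -
  let ?r = "snowflake_inv a e \<delta>" and ?c = "e powr (1 - a)"
  have r: "0 < ?r" "?r < 1"
    using snowflake_inv_pos snowflake_inv_le[of a e \<delta>] assms by auto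
  have "\<delta> = ?c * ?r powr a"
    using snowflake_snowflake_inv[of a e \<delta>] snowflake_inv_le[of a e \<delta>] snowflake_eq_small r assms
    by simp
  then have "ln \<delta> = ln (?c * ?r powr a)"
    by (rule arg_cong)
  then have ln_\<delta>: "ln \<delta> = ln ?c + a * ln ?r"
    using r assms by (simp add: ln_mult ln_powr)
  have "ln ?c \<le> 0"
    using assms by (simp add: ln_powr mult_nonneg_nonpos)
  moreover have "ln \<delta> < 0" "ln ?r < 0"
    using assms r by auto
  ultimately show "0 < k" "a * k \<le> 1"
    using ln_\<delta> by (auto simp: k_def divide_neg_neg pos_divide_le_eq neg_divide_le_eq)
  have "(t - a * (lr / L * t)) * lr = lr / L * t * lc" if "L = lc + a * lr" "L \<noteq> 0" for L lr lc
    using that by (simp add: field_simps)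
  from this[OF ln_\<delta>] have "(t - a * (k * t)) * ln ?r = k * t * ln ?c"
    using \<open>ln \<delta> < 0\<close> by (simp add: k_def)
  then show "?r powr (t - a * (k * t)) = ?c powr (k * t)"
    using r assms by (simp add: powr_def)
qed

lemma diam_rho_nonneg:
  assumes "E \<subseteq> X" "\<And>x y. x \<in> X \<Longrightarrow> y \<in> X \<Longrightarrow> 0 \<le> \<rho> x y \<and> \<rho> x y \<le> B"
  shows "0 \<le> diam_rho \<rho> E"
proof (cases "E = {}")
  case False
  then obtain x where "x \<in> E" by auto
  then have "\<rho> x x \<le> (SUP p\<in>E \<times> E. \<rho> (fst p) (snd p))"
    using assms by (intro cSUP_upper2[of _ _ "(x, x)"] bdd_aboveI[of _ B]) (auto simp: subset_iff)
  moreover have "0 \<le> \<rho> x x"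
    using \<open>x \<in> E\<close> assms by auto
  ultimately show ?thesis
    using False by (simp add: diam_rho_def)
qed (simp add: diam_rho_def)

lemma diam_rho_comp_mono:
  assumes "mono \<phi>" "continuous_on UNIV \<phi>" "\<phi> 0 = 0" "E \<subseteq> X"
    and "\<And>x y. x \<in> X \<Longrightarrow> y \<in> X \<Longrightarrow> \<rho>' x y = \<phi> (\<rho> x y)"
    and "\<And>x y. x \<in> X \<Longrightarrow> y \<in> X \<Longrightarrow> \<rho> x y \<le> B"
  shows "diam_rho \<rho>' E = \<phi> (diam_rho \<rho> E)"
proof (cases "E = {}")
  case False
  let ?S = "(\<lambda>p. \<rho> (fst p) (snd p)) ` (E \<times> E)"
  have "diam_rho \<rho>' E = (SUP s\<in>?S. \<phi> s)"
    using False assms(4,5) unfolding diam_rho_def image_image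
    by (auto simp: subset_iff intro!: SUP_cong)
  also have "\<dots> = \<phi> (Sup ?S)"
  proof (rule continuous_at_Sup_mono [symmetric])
    show "continuous (at_left (Sup ?S)) \<phi>"
      using assms(2) by (simp add: continuous_on_eq_continuous_at continuous_at_imp_continuous_within)
    show "bdd_above ?S"
      using assms(4,6) by (intro bdd_aboveI[of _ B]) (auto simp: subset_iff)
  qed (use assms(1) False in auto)
  finally show ?thesis
    using False by (simp add: diam_rho_def)
qed (simp add: diam_rho_def assms(3))

lemma dyn_metric_comp_mono:
  assumes "mono \<phi>" "finite A" "A \<noteq> {}"
  shows "dyn_metric act (\<lambda>x y. \<phi> (\<rho> x y)) A x y = \<phi> (dyn_metric act \<rho> A x y)"
  using mono_Max_commute[OF assms(1) finite_imageI[OF assms(2)], of "\<lambda>g. \<rho> (act g x) (act g y)"] assms(3)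
  by (simp add: dyn_metric_def image_image)

lemma dyn_metric_bounds:
  assumes "finite A" "A \<noteq> {}" "x \<in> X" "y \<in> X" "\<And>g x. x \<in> X \<Longrightarrow> act g x \<in> X"
    and "\<And>x y. x \<in> X \<Longrightarrow> y \<in> X \<Longrightarrow> 0 \<le> \<rho> x y \<and> \<rho> x y \<le> B"
  shows "0 \<le> dyn_metric act \<rho> A x y \<and> dyn_metric act \<rho> A x y \<le> B"
  using assms by (auto simp: dyn_metric_def Max_le_iff Max_ge_iff)

lemma pw_mult_powr:
  assumes "0 < c" "0 < a" "0 \<le> s" "0 \<le> D"
  shows "pw (c * D powr a) s = c powr s * pw D (a * s)"
  using assms by (cases "s = 0") (simp_all add: pw_def powr_mult powr_powr)

lemma pw_le_powr_mult:
  assumes "0 \<le> D" "D < r" "0 \<le> t'" "t' \<le> t"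
  shows "pw D t \<le> r powr (t - t') * pw D t'"
proof (cases "t = 0 \<or> D = 0")
  case False
  then have "D powr (t - t') * D powr t' \<le> r powr (t - t') * D powr t'"
    using assms by (intro mult_right_mono powr_mono2) auto
  then show ?thesis
    using False assms by (auto simp: pw_def powr_add [symmetric])
qed (use assms in \<open>auto simp: pw_def\<close>)


lemma hausdorff_content_le_by_covers:
  assumes "\<And>E. E \<subseteq> X \<Longrightarrow> diam_rho \<rho> E < r \<Longrightarrow>
             diam_rho \<rho>' E < r' \<and> pw (diam_rho \<rho>' E) s \<le> pw (diam_rho \<rho> E) t"
  shows "hausdorff_content X \<rho>' r' s \<le> hausdorff_content X \<rho> r t"
  unfolding hausdorff_content_def
proof (rule INF_mono)
  fix m
  assume "m \<in> {(I :: nat set, E). X = (\<Union>i\<in>I. E i) \<and> (\<forall>i\<in>I. diam_rho \<rho> (E i) < r)}"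
  then obtain I E where m: "m = (I, E)" and cover: "X = (\<Union>i\<in>I. E i)"
    and "\<forall>i\<in>I. diam_rho \<rho> (E i) < r"
    by auto
  then have terms: "\<forall>i\<in>I. diam_rho \<rho>' (E i) < r' \<and> pw (diam_rho \<rho>' (E i)) s \<le> pw (diam_rho \<rho> (E i)) t"
    using assms by blast
  then have "(\<Sum>i. if i \<in> I then ennreal (pw (diam_rho \<rho>' (E i)) s) else 0)
      \<le> (\<Sum>i. if i \<in> I then ennreal (pw (diam_rho \<rho> (E i)) t) else 0)"
    by (intro suminf_le summableI) (auto intro: ennreal_leI)
  then show "\<exists>n\<in>{(I, E). X = (\<Union>i\<in>I. E i) \<and> (\<forall>i\<in>I. diam_rho \<rho>' (E i) < r')}.
      (case n of (I, E) \<Rightarrow> \<Sum>i. if i \<in> I then ennreal (pw (diam_rho \<rho>' (E i)) s) else 0)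
      \<le> (case m of (I, E) \<Rightarrow> \<Sum>i. if i \<in> I then ennreal (pw (diam_rho \<rho> (E i)) t) else 0)"
    using m cover terms by (intro bexI[of _ "(I, E)"]) auto
qed

lemma dimH_antimono:
  assumes "r \<le> r'"
  shows "dimH X \<rho> r' \<le> dimH X \<rho> r"
proof -
  have "hausdorff_content X \<rho> r' s \<le> hausdorff_content X \<rho> r s" for s
    by (rule hausdorff_content_le_by_covers) (use assms in auto)
  then show ?thesis
    unfolding dimH_def by (intro Sup_subset_mono) (auto intro: order_trans)
qed

lemma mult_dimH_le:
  assumes "0 < k"
    and "\<And>t. 0 \<le> t \<Longrightarrow> 1 \<le> hausdorff_content X \<rho> r t \<Longrightarrow> 1 \<le> hausdorff_content Y \<rho>' r' (k * t)"
  shows "ereal k * dimH X \<rho> r \<le> dimH Y \<rho>' r'"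
proof -
  have "dimH X \<rho> r \<le> dimH Y \<rho>' r' / ereal k"
    unfolding dimH_def
  proof (rule Sup_least, clarify)
    fix t :: real
    assume "0 \<le> t" "1 \<le> hausdorff_content X \<rho> r t"
    then have "ereal (k * t) \<le> Sup {ereal s |s. 0 \<le> s \<and> 1 \<le> hausdorff_content Y \<rho>' r' s}"
      using assms by (intro Sup_upper) auto
    then show "ereal t \<le> Sup {ereal s |s. 0 \<le> s \<and> 1 \<le> hausdorff_content Y \<rho>' r' s} / ereal k"
      using assms by (subst ereal_le_divide_pos) auto
  qed
  then show ?thesis
    using assms by (subst (asm) ereal_le_divide_pos) auto
qed

context
  fixes X :: "'x set" and \<rho> \<rho>' :: "'x \<Rightarrow> 'x \<Rightarrow> real" and a e B \<delta> :: real
  assumes a: "0 < a" "a < 1" and e: "0 < e" "e < 1" and \<delta>: "0 < \<delta>" "\<delta> \<le> e"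
    and snowflake_rel: "\<And>x y. x \<in> X \<Longrightarrow> y \<in> X \<Longrightarrow> \<rho>' x y = snowflake a e (\<rho> x y)"
    and bounds: "\<And>x y. x \<in> X \<Longrightarrow> y \<in> X \<Longrightarrow> 0 \<le> \<rho> x y \<and> \<rho> x y \<le> B"
begin

lemma diam_rho_snowflake:
  "E \<subseteq> X \<Longrightarrow> diam_rho \<rho>' E = snowflake a e (diam_rho \<rho> E)"
  using a e snowflake_rel bounds
  by (intro diam_rho_comp_mono[where B = B] mono_snowflake continuous_on_snowflake) auto

lemma diam_rho_snowflake_less_iff:
  assumes "E \<subseteq> X"
  shows "diam_rho \<rho>' E < \<delta> \<longleftrightarrow> diam_rho \<rho> E < snowflake_inv a e \<delta>"
  using snowflake_less_iff[OF a(1) e(1) diam_rho_nonneg[of E X \<rho> B, OF assms bounds], of "snowflake_inv a e \<delta>"]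
    snowflake_snowflake_inv[OF a e(1) \<delta>] snowflake_inv_pos[OF e(1) \<delta>(1)]
    diam_rho_snowflake[OF assms]
  by (simp add: less_imp_le)

lemma diam_rho_snowflake_small:
  assumes "E \<subseteq> X" "diam_rho \<rho> E < snowflake_inv a e \<delta>"
  shows "diam_rho \<rho>' E = e powr (1 - a) * diam_rho \<rho> E powr a"
  using snowflake_eq_small[OF a diam_rho_nonneg[of E X \<rho> B, OF assms(1) bounds]]
    snowflake_inv_le[OF a(1) e(1) \<delta>] assms diam_rho_snowflake
  by simp

lemma hausdorff_content_snowflake_le:
  assumes "0 \<le> s"
  shows "hausdorff_content X \<rho>' \<delta> s \<le> hausdorff_content X \<rho> (snowflake_inv a e \<delta>) (a * s)"
proof (rule hausdorff_content_le_by_covers)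
  fix E
  assume E: "E \<subseteq> X" "diam_rho \<rho> E < snowflake_inv a e \<delta>"
  have "pw (diam_rho \<rho>' E) s = (e powr (1 - a)) powr s * pw (diam_rho \<rho> E) (a * s)"
    using diam_rho_snowflake_small[OF E] pw_mult_powr diam_rho_nonneg[of E X \<rho> B, OF E(1) bounds] a e assms
    by simp
  also have "\<dots> \<le> pw (diam_rho \<rho> E) (a * s)"
    using a e assms diam_rho_nonneg[of E X \<rho> B, OF E(1) bounds]
    by (intro mult_left_le_one_le powr_le1) (auto simp: pw_def intro: powr_le1)
  finally show "diam_rho \<rho>' E < \<delta> \<and> pw (diam_rho \<rho>' E) s \<le> pw (diam_rho \<rho> E) (a * s)"
    using diam_rho_snowflake_less_iff[OF E(1)] E(2) by simp
qed

lemma hausdorff_content_snowflake_ge: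
  defines "k \<equiv> ln (snowflake_inv a e \<delta>) / ln \<delta>"
  assumes "0 \<le> t"
  shows "hausdorff_content X \<rho> (snowflake_inv a e \<delta>) t \<le> hausdorff_content X \<rho>' \<delta> (k * t)"
proof (rule hausdorff_content_le_by_covers)
  let ?r = "snowflake_inv a e \<delta>"
  note k = snowflake_inv_log_ratio[OF a e \<delta>, folded k_def]
  have exponent_le: "a * (k * t) \<le> t"
    using mult_right_mono[OF k(2) assms(2)] by (simp add: mult.assoc)
  fix E
  assume "E \<subseteq> X" "diam_rho \<rho>' E < \<delta>"
  then have E: "E \<subseteq> X" "diam_rho \<rho> E < ?r"
    using diam_rho_snowflake_less_iff by auto
  have D: "0 \<le> diam_rho \<rho> E"
    using diam_rho_nonneg[of E X \<rho> B, OF E(1) bounds] .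
  have "pw (diam_rho \<rho> E) t \<le> ?r powr (t - a * (k * t)) * pw (diam_rho \<rho> E) (a * (k * t))"
    using pw_le_powr_mult[OF D E(2) _ exponent_le] a k assms(2) by simp
  also have "\<dots> = pw (diam_rho \<rho>' E) (k * t)"
    using k(3) diam_rho_snowflake_small[OF E] pw_mult_powr D a e k assms(2) by simp
  finally show "diam_rho \<rho> E < ?r \<and> pw (diam_rho \<rho> E) t \<le> pw (diam_rho \<rho>' E) (k * t)"
    using E(2) by simp
qed

lemma dimH_snowflake_le:
  "ereal a * dimH X \<rho>' \<delta> \<le> dimH X \<rho> (snowflake_inv a e \<delta>)"
  using a hausdorff_content_snowflake_le by (intro mult_dimH_le) (auto intro: order_trans)

lemma dimH_snowflake_ge:
  "ereal (ln (snowflake_inv a e \<delta>) / ln \<delta>) * dimH X \<rho> (snowflake_inv a e \<delta>) \<le> dimH X \<rho>' \<delta>"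
  using snowflake_inv_log_ratio(1)[OF a e \<delta>] hausdorff_content_snowflake_ge
  by (intro mult_dimH_le) (auto intro: order_trans)

end

lemma mult_limsup_divide_le:
  fixes u v :: "nat \<Rightarrow> ereal" and c :: "nat \<Rightarrow> nat"
  assumes "0 \<le> k" "\<And>n. ereal k * u n \<le> v n"
  shows "ereal k * limsup (\<lambda>n. u n / ereal (c n)) \<le> limsup (\<lambda>n. v n / ereal (c n))"
proof -
  have "ereal k * limsup (\<lambda>n. u n / ereal (c n)) = limsup (\<lambda>n. (ereal k * u n) / ereal (c n))"
    using assms(1) by (simp add: limsup_ereal_mult_left [symmetric] divide_ereal_def mult.assoc)
  also have "\<dots> \<le> limsup (\<lambda>n. v n / ereal (c n))"
    unfolding divide_ereal_def using assms(2)
    by (intro Limsup_mono always_eventually allI ereal_mult_right_mono inverse_ereal_ge0I) auto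
  finally show ?thesis .
qed

lemma tendsto_SUP_antimono_at_right:
  fixes B :: "real \<Rightarrow> 'a::{complete_linorder, linorder_topology}"
  assumes antimono: "\<And>r r'. 0 < r \<Longrightarrow> r \<le> r' \<Longrightarrow> B r' \<le> B r"
    and g: "filterlim g (at_right 0) F"
  shows "((\<lambda>x. B (g x)) \<longlongrightarrow> (SUP r\<in>{0<..}. B r)) F"
proof -
  have pos: "eventually (\<lambda>x. 0 < g x) F" and lim: "(g \<longlongrightarrow> 0) F"
    using g by (auto simp: filterlim_at elim: eventually_mono)
  show ?thesis
  proof (rule order_tendstoI)
    fix y
    assume "y < (SUP r\<in>{0<..}. B r)"
    then obtain r where r: "0 < r" "y < B r"
      by (auto simp: less_SUP_iff)
    from pos order_tendstoD(2)[OF lim r(1)] show "eventually (\<lambda>x. y < B (g x)) F"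
      by eventually_elim (use antimono r in \<open>fastforce intro: less_le_trans\<close>)
  next
    fix y
    assume "(SUP r\<in>{0<..}. B r) < y"
    with pos show "eventually (\<lambda>x. B (g x) < y) F"
      by (auto elim!: eventually_mono intro: le_less_trans[OF SUP_upper])
  qed
qed

lemma tendsto_divide_by_squeeze:
  fixes A B :: "real \<Rightarrow> ereal"
  assumes antimono: "\<And>r r'. 0 < r \<Longrightarrow> r \<le> r' \<Longrightarrow> B r' \<le> B r"
    and g: "filterlim g (at_right 0) (at_right 0)"
    and k: "(k \<longlongrightarrow> 1 / a) (at_right 0)" and a: "0 < a"
    and squeeze: "eventually (\<lambda>\<delta>. ereal (k \<delta>) * B (g \<delta>) \<le> A \<delta> \<and> ereal a * A \<delta> \<le> B (g \<delta>)) (at_right 0)"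
  shows "(A \<longlongrightarrow> (SUP r\<in>{0<..}. B r) / ereal a) (at_right 0)"
proof (rule tendsto_sandwich)
  have lim: "((\<lambda>\<delta>. B (g \<delta>)) \<longlongrightarrow> (SUP r\<in>{0<..}. B r)) (at_right 0)"
    using tendsto_SUP_antimono_at_right[OF antimono g] .
  have "((\<lambda>\<delta>. ereal (k \<delta>) * B (g \<delta>)) \<longlongrightarrow> ereal (1 / a) * (SUP r\<in>{0<..}. B r)) (at_right 0)"
    using a by (intro tendsto_mult_ereal tendsto_ereal k lim) auto
  moreover have "ereal (1 / a) * (SUP r\<in>{0<..}. B r) = (SUP r\<in>{0<..}. B r) / ereal a"
    using a by (simp add: divide_ereal_def inverse_eq_divide mult.commute)
  ultimately show "((\<lambda>\<delta>. ereal (k \<delta>) * B (g \<delta>)) \<longlongrightarrow> (SUP r\<in>{0<..}. B r) / ereal a) (at_right 0)"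
    by simp
  show "((\<lambda>\<delta>. B (g \<delta>) / ereal a) \<longlongrightarrow> (SUP r\<in>{0<..}. B r) / ereal a) (at_right 0)"
    using a unfolding divide_ereal_def by (intro tendsto_mult_ereal lim tendsto_const) auto
  show "eventually (\<lambda>\<delta>. ereal (k \<delta>) * B (g \<delta>) \<le> A \<delta>) (at_right 0)"
    using squeeze by eventually_elim simp
  show "eventually (\<lambda>\<delta>. A \<delta> \<le> B (g \<delta>) / ereal a) (at_right 0)"
    using squeeze by eventually_elim (use a in \<open>simp add: ereal_le_divide_pos\<close>)
qed

lemma filterlim_snowflake_inv:
  assumes "0 < a" "0 < e"
  shows "filterlim (snowflake_inv a e) (at_right 0) (at_right 0)"
proof -
  have "(snowflake_inv a e \<longlongrightarrow> 0) (at_right 0)"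
    unfolding snowflake_inv_def using assms
    by (intro tendsto_zero_powrI[where b = "1 / a"] tendsto_divide_zero tendsto_ident_at tendsto_const)
       (auto simp: eventually_at_right_field)
  moreover have "eventually (\<lambda>\<delta>. 0 < snowflake_inv a e \<delta>) (at_right 0)"
    using assms snowflake_inv_pos by (auto simp: eventually_at_right_field intro: exI[of _ 1])
  ultimately show ?thesis
    by (auto simp: filterlim_at elim: eventually_mono)
qed

lemma tendsto_ln_snowflake_inv_over_ln:
  assumes "0 < a" "0 < e"
  shows "((\<lambda>\<delta>. ln (snowflake_inv a e \<delta>) / ln \<delta>) \<longlongrightarrow> 1 / a) (at_right 0)"
proof -
  have "((\<lambda>\<delta>. (1 - ln (e powr (1 - a)) / ln \<delta>) / a) \<longlongrightarrow> (1 - 0) / a) (at_right 0)"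
    using assms by (intro tendsto_intros tendsto_divide_0[OF tendsto_const]
          filterlim_at_bot_imp_at_infinity ln_at_0) auto
  moreover have "eventually (\<lambda>\<delta>. (1 - ln (e powr (1 - a)) / ln \<delta>) / a
                    = ln (snowflake_inv a e \<delta>) / ln \<delta>) (at_right 0)"
    unfolding eventually_at_right_field using assms
    by (intro exI[of _ 1]) (auto simp: snowflake_inv_def ln_powr ln_div field_simps)
  ultimately show ?thesis
    by (auto intro: Lim_transform_eventually)
qed

lemma G_system_bounded:
  assumes "G_system act X d"
  obtains B where "\<And>x y. x \<in> X \<Longrightarrow> y \<in> X \<Longrightarrow> 0 \<le> d x y \<and> d x y \<le> B"
proof -
  interpret Metric_space X d
    using assms by (simp add: G_system_def)
  have "mbounded X"
    using assms compactin_imp_mbounded by (simp add: G_system_def compact_space_def)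
  then show ?thesis
    using that by (auto simp: mbounded_alt)
qed

lemma G_system_act_in: "G_system act X d \<Longrightarrow> x \<in> X \<Longrightarrow> act g x \<in> X"
  by (auto simp: G_system_def image_subset_iff)

lemma dyn_metric_d_alpha_eps:
  assumes "G_system act X d" "finite A" "A \<noteq> {}" "0 < a" "a < 1" "0 < e" "x \<in> X" "y \<in> X"
  shows "dyn_metric act (d_alpha_eps d a e) A x y = snowflake a e (dyn_metric act d A x y)"
proof -
  interpret Metric_space X d
    using assms(1) by (simp add: G_system_def)
  have "dyn_metric act (d_alpha_eps d a e) A x y = dyn_metric act (\<lambda>x y. snowflake a e (d x y)) A x y"
    unfolding dyn_metric_def using assms G_system_act_in
    by (intro arg_cong[where f = Max] image_cong d_alpha_eps_eq_snowflake) auto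
  also have "\<dots> = snowflake a e (dyn_metric act d A x y)"
    using assms mono_snowflake by (intro dyn_metric_comp_mono) auto
  finally show ?thesis .
qed

definition upper_mdimH_at :: "('g \<Rightarrow> 'x \<Rightarrow> 'x) \<Rightarrow> 'x set \<Rightarrow> (nat \<Rightarrow> 'g set) \<Rightarrow> ('x \<Rightarrow> 'x \<Rightarrow> real) \<Rightarrow> real \<Rightarrow> ereal"
  where "upper_mdimH_at act X F \<rho> r =
    limsup (\<lambda>n. dimH X (dyn_metric act \<rho> (F n)) r / ereal (real (card (F n))))"

lemma upper_mdimH_eq_Lim: "upper_mdimH act X F \<rho> = Lim (at_right 0) (upper_mdimH_at act X F \<rho>)"
  by (simp add: upper_mdimH_def upper_mdimH_at_def [abs_def])

lemma upper_mdimH_at_antimono: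
  "r \<le> r' \<Longrightarrow> upper_mdimH_at act X F \<rho> r' \<le> upper_mdimH_at act X F \<rho> r"
  unfolding upper_mdimH_at_def
  by (intro mult_limsup_divide_le[where k = 1 and c = "\<lambda>n. card (F n)", simplified] dimH_antimono)

lemma upper_mdimH_at_snowflake:
  assumes "G_system act X d" "\<And>n. finite (F n)" "\<And>n. F n \<noteq> {}"
    and a: "0 < a" "a < 1" and e: "0 < e" "e < 1" and \<delta>: "0 < \<delta>" "\<delta> \<le> e"
  defines "r \<equiv> snowflake_inv a e \<delta>"
  shows "ereal (ln r / ln \<delta>) * upper_mdimH_at act X F d r \<le> upper_mdimH_at act X F (d_alpha_eps d a e) \<delta>"
    and "ereal a * upper_mdimH_at act X F (d_alpha_eps d a e) \<delta> \<le> upper_mdimH_at act X F d r"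
proof -
  obtain B where "\<And>x y. x \<in> X \<Longrightarrow> y \<in> X \<Longrightarrow> 0 \<le> d x y \<and> d x y \<le> B"
    using G_system_bounded[OF assms(1)] by blast
  then have bounds: "\<And>x y. x \<in> X \<Longrightarrow> y \<in> X \<Longrightarrow>
      0 \<le> dyn_metric act d (F n) x y \<and> dyn_metric act d (F n) x y \<le> B" for n
    using assms(2,3) G_system_act_in[OF assms(1)] by (intro dyn_metric_bounds) auto
  note rel = dyn_metric_d_alpha_eps[OF assms(1-3) a(1,2) e(1)]
  have "0 \<le> ln r / ln \<delta>"
    using snowflake_inv_log_ratio(1)[OF a e \<delta>] by (simp add: r_def)
  then show "ereal (ln r / ln \<delta>) * upper_mdimH_at act X F d r \<le> upper_mdimH_at act X F (d_alpha_eps d a e) \<delta>"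
    unfolding upper_mdimH_at_def r_def
    using dimH_snowflake_ge[OF a e \<delta> rel bounds] by (intro mult_limsup_divide_le[where c = "\<lambda>n. card (F n)"]) auto
  show "ereal a * upper_mdimH_at act X F (d_alpha_eps d a e) \<delta> \<le> upper_mdimH_at act X F d r"
    unfolding upper_mdimH_at_def r_def
    using a dimH_snowflake_le[OF a e \<delta> rel bounds] by (intro mult_limsup_divide_le[where c = "\<lambda>n. card (F n)"]) auto
qed

theorem mainTheorem11:
  fixes act :: "'g::{group_add,countable} \<Rightarrow> 'x \<Rightarrow> 'x"
    and X :: "'x set" and d :: "'x \<Rightarrow> 'x \<Rightarrow> real" and F :: "nat \<Rightarrow> 'g set"
    and \<alpha> \<epsilon> :: real
  assumes "G_system act X d"
    and "folner F"
    and "0 < \<alpha>" "\<alpha> < 1" "0 < \<epsilon>" "\<epsilon> < 1"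
  shows "upper_mdimH act X F (d_alpha_eps d \<alpha> \<epsilon>) = upper_mdimH act X F d / ereal \<alpha>"
proof -
  let ?A = "upper_mdimH_at act X F (d_alpha_eps d \<alpha> \<epsilon>)" and ?B = "upper_mdimH_at act X F d"
    and ?r = "snowflake_inv \<alpha> \<epsilon>"
  have F: "\<And>n. finite (F n)" "\<And>n. F n \<noteq> {}"
    using assms(2) by (auto simp: folner_def)
  have antimono: "\<And>r r'. 0 < r \<Longrightarrow> r \<le> r' \<Longrightarrow> ?B r' \<le> ?B r"
    by (rule upper_mdimH_at_antimono)
  have "eventually (\<lambda>\<delta>. 0 < \<delta> \<and> \<delta> \<le> \<epsilon>) (at_right 0)"
    using assms(5) by (auto simp: eventually_at_right_field intro: exI[of _ \<epsilon>])
  then have squeeze: "eventually (\<lambda>\<delta>. ereal (ln (?r \<delta>) / ln \<delta>) * ?B (?r \<delta>) \<le> ?A \<delta> \<and> ereal \<alpha> * ?A \<delta> \<le> ?B (?r \<delta>))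
      (at_right 0)"
    by eventually_elim (use upper_mdimH_at_snowflake[OF assms(1) F assms(3-6)] in auto)
  have "(?A \<longlongrightarrow> (SUP r\<in>{0<..}. ?B r) / ereal \<alpha>) (at_right 0)"
    by (rule tendsto_divide_by_squeeze[OF antimono filterlim_snowflake_inv[OF assms(3,5)]
          tendsto_ln_snowflake_inv_over_ln[OF assms(3,5)] assms(3) squeeze])
  moreover have "(?B \<longlongrightarrow> (SUP r\<in>{0<..}. ?B r)) (at_right 0)"
    using tendsto_SUP_antimono_at_right[OF antimono filterlim_ident] by simp
  ultimately show ?thesis
    unfolding upper_mdimH_eq_Lim by (simp add: tendsto_Lim)
qed

end
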